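(* Consider the following RSS-based localization setting. A stationary target is at an unknown position $\mathbf{s}=(x,y,0)\in\mathbb{R}^3$. There are $N$ UAVs; UAV $i$ ($1\le i\le N$) takes $M_i\ge1$ measurements, the $j$-th one at position $\mathbf{u}_{i,j}=(x_{i,j},y_{i,j},h_{i,j})$. Let $r_{i,j}=\sqrt{(x-x_{i,j})^2+(y-y_{i,j})^2}$, $d_{i,j}=\sqrt{r_{i,j}^2+h_{i,j}^2}$, and let $\beta_{i,j}$ be the horizontal UAV–target angle, i.e. $(x_{i,j}-x,\,y_{i,j}-y)=r_{i,j}(\cos\beta_{i,j},\sin\beta_{i,j})$, with $\mathbf{g}_{i,j}=(\cos\beta_{i,j},\sin\beta_{i,j})^T$. The $j$-th measurement of UAV $i$ is $R_{i,j}=p_0-10\gamma\log_{10}(d_{i,j})+\eta_{i,j}$ with known $p_0$, $\gamma>0$ and independent noises $\eta_{i,j}\sim\mathcal{N}(0,\sigma_i^2)$, $\sigma_i>0$. The Fisher information matrix for $(x,y)$ is $$\mathbf{F}=\Big(\frac{10\gamma}{\ln 10}\Big)^2\sum_{i=1}^N\sum_{j=1}^{M_i}\sigma_i^{-2}\frac{r_{i,j}^2}{d_{i,j}^4}\mathbf{g}_{i,j}\mathbf{g}_{i,j}^T.$$ A configuration is feasible if $r_{i,j}\ge r_0$, $h_{i,j}\ge h_0$ for all $i,j$, and $\|\mathbf{u}_{i,j}-\mathbf{u}_{i,j-1}\|\le t_0c_{\max}$ for $2\le j\le M_i$, where $r_0,h_0,t_0,c_{\max}>0$ are given. Problem P is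 to maximize $\det\mathbf{F}$ over feasible configurations. Let $r^*=\max\{r_0,h_0\}$. Suppose $M_i=M$ for all $i$, $t_0Mc_{\max}<2\pi r^*$, and $\max\{\sigma_i^{-2}:1\le i\le N\}\le\frac12\sum_{i=1}^N\sigma_i^{-2}$. Let $\beta_{1,0},\dots,\beta_{N,0}$ be angles satisfying $\sum_{i=1}^N\sigma_i^{-2}\mathbf{g}(\beta_{i,0})\mathbf{g}(\beta_{i,0})^T=\frac12\big(\sum_{i=1}^N\sigma_i^{-2}\big)\mathbf{I}$, where $\mathbf{g}(\beta)=(\cos\beta,\sin\beta)^T$, and let $0\le c<c_{\max}$. Then the configuration with $r_{i,j}=r^*$, $h_{i,j}=h_0$ and $$\beta_{i,j}=\beta_{i,0}+(j-1)\frac{ct_0}{r^*},\qquad 1\le i\le N,\ 1\le j\le M,$$ is an optimal solution of problem P.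
   Context: $\mathbf{I}$ is the $2\times2$ identity matrix. The optimization is over UAV positions for a given target position $\mathbf{s}$. *)

theory Defs
  imports "HOL-Analysis.Analysis"
begin

definition target :: "real \<Rightarrow> real \<Rightarrow> real^3" where
  "target x y = vector [x, y, 0]"

definition hdist :: "real \<Rightarrow> real \<Rightarrow> real^3 \<Rightarrow> real" where
  "hdist x y u = sqrt ((x - u$1)^2 + (y - u$2)^2)"

definition gdir :: "real \<Rightarrow> real^2" where
  "gdir b = vector [cos b, sin b]"

definition gvec :: "real \<Rightarrow> real \<Rightarrow> real^3 \<Rightarrow> real^2" where
  "gvec x y u = (1 / hdist x y u) *\<^sub>R vector [u$1 - x, u$2 - y]"

definition outer :: "real^2 \<Rightarrow> real^2 \<Rightarrow> real^2^2" where
  "outer v w = (\<chi> k l. v$k * w$l)"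

definition FIM :: "real \<Rightarrow> (nat \<Rightarrow> real) \<Rightarrow> nat \<Rightarrow> nat \<Rightarrow> real \<Rightarrow> real
    \<Rightarrow> (nat \<Rightarrow> nat \<Rightarrow> real^3) \<Rightarrow> real^2^2" where
  "FIM \<gamma> \<sigma> N M x y u =
     (10 * \<gamma> / ln 10)^2 *\<^sub>R
     (\<Sum>i=1..N. \<Sum>j=1..M.
        (inverse ((\<sigma> i)^2) * (hdist x y (u i j))^2 / (norm (u i j - target x y))^4)
          *\<^sub>R outer (gvec x y (u i j)) (gvec x y (u i j)))"

definition feasible :: "real \<Rightarrow> real \<Rightarrow> real \<Rightarrow> real \<Rightarrow> nat \<Rightarrow> nat \<Rightarrow> real \<Rightarrow> real
    \<Rightarrow> (nat \<Rightarrow> nat \<Rightarrow> real^3) \<Rightarrow> bool" where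
  "feasible r0 h0 t0 cmax N M x y u \<longleftrightarrow>
     (\<forall>i\<in>{1..N}. \<forall>j\<in>{1..M}.
        hdist x y (u i j) \<ge> r0 \<and> (u i j)$3 \<ge> h0 \<and>
        (j \<ge> 2 \<longrightarrow> norm (u i j - u i (j - 1)) \<le> t0 * cmax))"

definition optimal_P :: "real \<Rightarrow> (nat \<Rightarrow> real) \<Rightarrow> real \<Rightarrow> real \<Rightarrow> real \<Rightarrow> real
    \<Rightarrow> nat \<Rightarrow> nat \<Rightarrow> real \<Rightarrow> real \<Rightarrow> (nat \<Rightarrow> nat \<Rightarrow> real^3) \<Rightarrow> bool" where
  "optimal_P \<gamma> \<sigma> r0 h0 t0 cmax N M x y u \<longleftrightarrow>
     feasible r0 h0 t0 cmax N M x y u \<and>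
     (\<forall>v. feasible r0 h0 t0 cmax N M x y v \<longrightarrow>
        det (FIM \<gamma> \<sigma> N M x y v) \<le> det (FIM \<gamma> \<sigma> N M x y u))"

end

theory Submission
  imports Defs
begin

text \<open>Every term of \<open>F\<close> is a nonnegative multiple of \<open>g g\<^sup>T\<close> with \<open>g\<close> a unit vector, so \<open>F\<close> is
  symmetric and its trace is \<open>K \<Sum> \<sigma>\<^sub>i\<^sup>-\<^sup>2 r\<^sup>2/d\<^sup>4\<close> with \<open>K = (10\<gamma>/ln 10)\<^sup>2\<close>; for a symmetric
  2x2 matrix \<open>det F \<le> (tr F/2)\<^sup>2\<close>. Under \<open>r \<ge> r0\<close>, \<open>h \<ge> h0\<close> the factor \<open>r\<^sup>2/(r\<^sup>2+h\<^sup>2)\<^sup>2\<close> is largest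
  at \<open>h = h0\<close>, \<open>r = max r0 h0\<close>, since \<open>t/(t+a)\<^sup>2\<close> increases up to \<open>t = a\<close> and decreases after.
  This bounds \<open>det F\<close> on all feasible configurations. The proposed configuration attains the
  bound: every term has the maximal factor, and at each time \<open>j\<close> its directions are the balanced
  ones rotated by a common angle, which keeps \<open>\<Sum>\<^sub>i \<sigma>\<^sub>i\<^sup>-\<^sup>2 g g\<^sup>T\<close> a multiple of the identity.
  It is feasible because a chord is shorter than its arc.\<close>

lemma det2_le_half_trace_sq:
  fixes A :: "real^2^2"
  assumes "A$1$2 = A$2$1"
  shows "det A \<le> (trace A / 2)^2"
proof -
  have "det A = (trace A / 2)^2 - ((A$1$1 - A$2$2) / 2)^2 - (A$1$2)^2"
    using assms by (simp add: det_2 trace_def sum_2 power2_eq_square field_simps)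
  then show ?thesis by simp
qed

lemma trace_scaleR: "trace (c *\<^sub>R A) = c * trace (A :: real^'n^'n)"
  by (simp add: trace_def sum_distrib_left)

lemma trace_sum: "trace (\<Sum>i\<in>I. A i) = (\<Sum>i\<in>I. trace (A i :: 'a::comm_semiring_1^'n^'n))"
  unfolding trace_def by (simp add: sum_component sum.swap[of _ UNIV])

lemma trace_outer_self: "trace (outer v v) = (norm v)^2"
  by (simp add: trace_def outer_def power2_norm_eq_inner inner_vec_def)

lemma dist_gdir: "dist (gdir a) (gdir b) = 2 * \<bar>sin ((a - b) / 2)\<bar>"
proof -
  have "cos a - cos b = - 2 * sin ((a + b) / 2) * sin ((a - b) / 2)"
  proof -
    have "sin ((b - a) / 2) = - sin ((a - b) / 2)"
      by (metis minus_diff_eq minus_divide_left sin_minus)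
    then show ?thesis using cos_diff_cos[of a b] by simp
  qed
  moreover have "sin a - sin b = 2 * sin ((a - b) / 2) * cos ((a + b) / 2)"
    by (rule sin_diff_sin)
  moreover have "(dist (gdir a) (gdir b))^2 = (cos a - cos b)^2 + (sin a - sin b)^2"
    unfolding dist_norm power2_norm_eq_inner inner_vec_def sum_2 by (simp add: gdir_def power2_eq_square)
  ultimately have "(dist (gdir a) (gdir b))^2 = (2 * sin ((a - b) / 2))^2"
    using sin_cos_squared_add[of "(a + b) / 2"] by algebra
  then have "dist (gdir a) (gdir b) = \<bar>2 * sin ((a - b) / 2)\<bar>"
    by (metis abs_of_nonneg real_sqrt_abs zero_le_dist)
  then show ?thesis by (simp add: abs_mult)
qed

lemma dist_gdir_le: "dist (gdir a) (gdir b) \<le> \<bar>a - b\<bar>"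
  using abs_sin_x_le_abs_x[of "(a - b) / 2"] by (simp add: dist_gdir)

text \<open>\<open>rss_gain r h\<close> is the factor \<open>r\<^sup>2 / d\<^sup>4\<close> of the Fisher information, written in terms of the
  horizontal distance \<open>r\<close> and the height \<open>h\<close>, since \<open>d\<^sup>2 = r\<^sup>2 + h\<^sup>2\<close>.\<close>

definition rss_gain :: "real \<Rightarrow> real \<Rightarrow> real" where
  "rss_gain r h = r^2 / (r^2 + h^2)^2"

lemma rss_gain_antimono_height:
  assumes "0 \<le> h0" "h0 \<le> h"
  shows "rss_gain r h \<le> rss_gain r h0"
proof (cases "r = 0")
  case False
  then show ?thesis unfolding rss_gain_def using assms
    by (intro divide_left_mono power_mono add_left_mono) (auto intro: power_mono)
qed (simp add: rss_gain_def)

lemma frac_sq_le_at_max: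
  fixes a s t :: real
  assumes "0 < a" "0 \<le> s" "s \<le> t"
  shows "t / (t + a)^2 \<le> max s a / (max s a + a)^2"
proof -
  define m where "m = max s a"
  have key: "m * (t + a)^2 - t * (m + a)^2 = (t - m) * (t * m - a^2)"
    by (simp add: power2_eq_square algebra_simps)
  have "0 \<le> (t - m) * (t * m - a^2)"
  proof (cases "a \<le> s")
    case True
    then have "a \<le> m" "m \<le> t" using assms by (auto simp: m_def)
    then have "a * a \<le> t * m" using assms by (intro mult_mono) auto
    then show ?thesis using \<open>m \<le> t\<close> by (simp add: power2_eq_square)
  next
    case False
    then have "(t - m) * (t * m - a^2) = a * (t - a)^2" by (simp add: m_def power2_eq_square algebra_simps)
    then show ?thesis using assms by simp
  qed
  moreover have "0 < m" using assms by (simp add: m_def)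
  ultimately show ?thesis using assms key by (simp add: m_def[symmetric] divide_simps)
qed

lemma rss_gain_le_max:
  assumes "0 < r0" "0 < h0" "r0 \<le> r" "h0 \<le> h"
  shows "rss_gain r h \<le> rss_gain (max r0 h0) h0"
proof -
  have "rss_gain r h \<le> rss_gain r h0" using assms by (intro rss_gain_antimono_height) auto
  also have "\<dots> \<le> max (r0^2) (h0^2) / (max (r0^2) (h0^2) + h0^2)^2"
    unfolding rss_gain_def using assms by (intro frac_sq_le_at_max) (auto intro: power_mono)
  also have "max (r0^2) (h0^2) = (max r0 h0)^2"
    using assms by (simp add: max_def power_mono)
  finally show ?thesis by (simp add: rss_gain_def)
qed

lemma hdist_sq: "(hdist x y u)^2 = (u$1 - x)^2 + (u$2 - y)^2"
  by (simp add: hdist_def power2_commute)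

lemma norm_sub_target_sq: "(norm (u - target x y))^2 = (hdist x y u)^2 + (u$3)^2"
  unfolding power2_norm_eq_inner inner_vec_def sum_3 hdist_sq target_def
  by (simp add: power2_eq_square algebra_simps)

lemma norm_gvec:
  assumes "hdist x y u \<noteq> 0"
  shows "norm (gvec x y u) = 1"
proof -
  have "(norm (gvec x y u))^2 = ((u$1 - x)^2 + (u$2 - y)^2) / (hdist x y u)^2"
    unfolding gvec_def power2_norm_eq_inner inner_vec_def sum_2
    by (simp add: power2_eq_square add_divide_distrib)
  also have "\<dots> = 1"
    using assms by (simp flip: hdist_sq)
  finally show ?thesis using norm_ge_zero by (metis abs_of_nonneg real_sqrt_abs real_sqrt_one)
qed

lemma FIM_rss_gain:
  "FIM \<gamma> \<sigma> N M x y u = (10 * \<gamma> / ln 10)^2 *\<^sub>R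
     (\<Sum>i=1..N. \<Sum>j=1..M. (inverse ((\<sigma> i)^2) * rss_gain (hdist x y (u i j)) (u i j $ 3))
        *\<^sub>R outer (gvec x y (u i j)) (gvec x y (u i j)))"
proof -
  have "(norm (u i j - target x y))^4 = ((hdist x y (u i j))^2 + (u i j $ 3)^2)^2" for i j
    by (simp flip: norm_sub_target_sq power_mult)
  then show ?thesis by (simp add: FIM_def rss_gain_def)
qed

lemma FIM_sym: "FIM \<gamma> \<sigma> N M x y u $ 1 $ 2 = FIM \<gamma> \<sigma> N M x y u $ 2 $ 1"
  by (simp add: FIM_def outer_def mult.commute)

lemma trace_FIM:
  assumes "\<forall>i\<in>{1..N}. \<forall>j\<in>{1..M}. hdist x y (u i j) \<noteq> 0"
  shows "trace (FIM \<gamma> \<sigma> N M x y u) = (10 * \<gamma> / ln 10)^2 *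
     (\<Sum>i=1..N. \<Sum>j=1..M. inverse ((\<sigma> i)^2) * rss_gain (hdist x y (u i j)) (u i j $ 3))"
  using assms by (simp add: FIM_rss_gain trace_scaleR trace_sum trace_outer_self norm_gvec)

lemma det_FIM_le_of_feasible:
  assumes "0 < r0" "0 < h0" and feasible: "feasible r0 h0 t0 cmax N M x y v"
  shows "det (FIM \<gamma> \<sigma> N M x y v) \<le>
    ((10 * \<gamma> / ln 10)^2 * rss_gain (max r0 h0) h0 * real M * (\<Sum>i=1..N. inverse ((\<sigma> i)^2)) / 2)^2"
proof -
  let ?F = "FIM \<gamma> \<sigma> N M x y v"
  let ?gain = "\<lambda>i j. inverse ((\<sigma> i)^2) * rss_gain (hdist x y (v i j)) (v i j $ 3)"
  have bounds: "r0 \<le> hdist x y (v i j)" "h0 \<le> v i j $ 3" if "i \<in> {1..N}" "j \<in> {1..M}" for i j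
    using feasible that unfolding feasible_def by auto
  have trace: "trace ?F = (10 * \<gamma> / ln 10)^2 * (\<Sum>i=1..N. \<Sum>j=1..M. ?gain i j)"
    using bounds \<open>0 < r0\<close> by (intro trace_FIM) force
  have gain_nonneg: "0 \<le> (\<Sum>i=1..N. \<Sum>j=1..M. ?gain i j)"
    by (intro sum_nonneg mult_nonneg_nonneg) (simp_all add: rss_gain_def)
  have "(\<Sum>i=1..N. \<Sum>j=1..M. ?gain i j) \<le>
      (\<Sum>i=1..N. \<Sum>j=1..M. inverse ((\<sigma> i)^2) * rss_gain (max r0 h0) h0)"
    using bounds assms by (intro sum_mono mult_left_mono rss_gain_le_max) auto
  also have "\<dots> = rss_gain (max r0 h0) h0 * real M * (\<Sum>i=1..N. inverse ((\<sigma> i)^2))"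
    by (simp add: sum_distrib_left mult_ac)
  finally have "(trace ?F / 2)^2 \<le>
      ((10 * \<gamma> / ln 10)^2 * rss_gain (max r0 h0) h0 * real M * (\<Sum>i=1..N. inverse ((\<sigma> i)^2)) / 2)^2"
    unfolding trace mult.assoc using gain_nonneg by (intro power_mono divide_right_mono mult_left_mono) auto
  moreover have "det ?F \<le> (trace ?F / 2)^2"
    using FIM_sym by (rule det2_le_half_trace_sq)
  ultimately show ?thesis by linarith
qed

definition polar_point :: "real \<Rightarrow> real \<Rightarrow> real \<Rightarrow> real \<Rightarrow> real \<Rightarrow> real^3" where
  "polar_point x y R h \<theta> = vector [x + R * cos \<theta>, y + R * sin \<theta>, h]"

lemma polar_point_height [simp]: "polar_point x y R h \<theta> $ 3 = h"
  by (simp add: polar_point_def)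

lemma hdist_polar_point:
  assumes "0 \<le> R"
  shows "hdist x y (polar_point x y R h \<theta>) = R"
proof -
  have "(hdist x y (polar_point x y R h \<theta>))^2 = R^2"
    by (simp add: hdist_sq polar_point_def power_mult_distrib flip: distrib_left)
  then show ?thesis
    using assms by (simp add: hdist_def)
qed

lemma gvec_polar_point:
  assumes "0 < R"
  shows "gvec x y (polar_point x y R h \<theta>) = gdir \<theta>"
  using assms by (simp add: gvec_def hdist_polar_point gdir_def vec_eq_iff forall_2)
    (simp add: polar_point_def)

lemma dist_polar_point:
  assumes "0 \<le> R"
  shows "dist (polar_point x y R h a) (polar_point x y R h b) = R * dist (gdir a) (gdir b)"
proof -
  have "polar_point x y R h a - polar_point x y R h b = R *\<^sub>R vector [cos a - cos b, sin a - sin b, 0]"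
    by (simp add: polar_point_def vec_eq_iff forall_3 algebra_simps)
  moreover have "norm (vector [p, q, 0] :: real^3) = norm (vector [p, q] :: real^2)" for p q
    by (simp add: norm_eq_sqrt_inner inner_vec_def sum_2 sum_3)
  moreover have "gdir a - gdir b = vector [cos a - cos b, sin a - sin b]"
    by (simp add: gdir_def vec_eq_iff forall_2)
  ultimately show ?thesis
    using assms by (simp add: dist_norm)
qed

lemma sum_outer_gdir_rotate:
  fixes w \<beta> :: "'i \<Rightarrow> real"
  assumes "(\<Sum>i\<in>I. w i *\<^sub>R outer (gdir (\<beta> i)) (gdir (\<beta> i))) = s *\<^sub>R mat 1"
  shows "(\<Sum>i\<in>I. w i *\<^sub>R outer (gdir (\<beta> i + \<phi>)) (gdir (\<beta> i + \<phi>))) = s *\<^sub>R mat 1"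
proof -
  define m where "m f = (\<Sum>i\<in>I. w i * f (\<beta> i))" for f :: "real \<Rightarrow> real"
  have m_linear: "m (\<lambda>b. p * f b + q * g b + r * h b) = p * m f + q * m g + r * m h" for p q r f g h
    by (simp add: m_def sum.distrib sum_distrib_left algebra_simps)
  have m_cong: "m f = m g" if "\<And>b. f b = g b" for f g
    using that by (simp add: m_def)
  have cc: "m (\<lambda>b. cos b * cos b) = s"
    using arg_cong[OF assms, of "\<lambda>A. A$1$1"] by (simp add: m_def outer_def gdir_def mat_def)
  have ss: "m (\<lambda>b. sin b * sin b) = s"
    using arg_cong[OF assms, of "\<lambda>A. A$2$2"] by (simp add: m_def outer_def gdir_def mat_def)
  have cs: "m (\<lambda>b. cos b * sin b) = 0"
    using arg_cong[OF assms, of "\<lambda>A. A$1$2"] by (simp add: m_def outer_def gdir_def mat_def)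
  let ?C = "cos \<phi>" and ?S = "sin \<phi>"
  have rot11: "m (\<lambda>b. cos (b + \<phi>) * cos (b + \<phi>)) = s"
  proof -
    have "m (\<lambda>b. cos (b + \<phi>) * cos (b + \<phi>)) =
        m (\<lambda>b. ?C^2 * (cos b * cos b) + (- 2 * ?C * ?S) * (cos b * sin b) + ?S^2 * (sin b * sin b))"
      by (rule m_cong) (simp add: cos_add power2_eq_square algebra_simps)
    also have "\<dots> = s"
      unfolding m_linear cc ss cs by (simp flip: distrib_right)
    finally show ?thesis .
  qed
  have rot22: "m (\<lambda>b. sin (b + \<phi>) * sin (b + \<phi>)) = s"
  proof -
    have "m (\<lambda>b. sin (b + \<phi>) * sin (b + \<phi>)) =
        m (\<lambda>b. ?S^2 * (cos b * cos b) + (2 * ?C * ?S) * (cos b * sin b) + ?C^2 * (sin b * sin b))"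
      by (rule m_cong) (simp add: sin_add power2_eq_square algebra_simps)
    also have "\<dots> = s"
      unfolding m_linear cc ss cs by (simp flip: distrib_right)
    finally show ?thesis .
  qed
  have rot12: "m (\<lambda>b. cos (b + \<phi>) * sin (b + \<phi>)) = 0"
  proof -
    have "m (\<lambda>b. cos (b + \<phi>) * sin (b + \<phi>)) =
        m (\<lambda>b. (?C * ?S) * (cos b * cos b) + (?C^2 - ?S^2) * (cos b * sin b) + (- ?C * ?S) * (sin b * sin b))"
      by (rule m_cong) (simp add: sin_add cos_add power2_eq_square algebra_simps)
    also have "\<dots> = 0"
      unfolding m_linear cc ss cs by simp
    finally show ?thesis .
  qed
  show ?thesis
    using rot11 rot22 rot12
    by (simp add: vec_eq_iff forall_2 m_def outer_def gdir_def mat_def mult.commute)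
qed

lemma FIM_rotated_polar_points:
  assumes "0 < R"
    and balanced: "(\<Sum>i=1..N. inverse ((\<sigma> i)^2) *\<^sub>R outer (gdir (\<beta> i)) (gdir (\<beta> i))) = s *\<^sub>R mat 1"
  shows "FIM \<gamma> \<sigma> N M x y (\<lambda>i j. polar_point x y R h (\<beta> i + \<phi> j))
    = ((10 * \<gamma> / ln 10)^2 * rss_gain R h * real M * s) *\<^sub>R mat 1"
proof -
  let ?P = "\<lambda>i j. outer (gdir (\<beta> i + \<phi> j)) (gdir (\<beta> i + \<phi> j))"
  have "FIM \<gamma> \<sigma> N M x y (\<lambda>i j. polar_point x y R h (\<beta> i + \<phi> j)) = (10 * \<gamma> / ln 10)^2 *\<^sub>R
      (\<Sum>i=1..N. \<Sum>j=1..M. (inverse ((\<sigma> i)^2) * rss_gain R h) *\<^sub>R ?P i j)"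
    using \<open>0 < R\<close> by (simp add: FIM_rss_gain hdist_polar_point gvec_polar_point)
  also have "\<dots> = ((10 * \<gamma> / ln 10)^2 * rss_gain R h) *\<^sub>R
      (\<Sum>j=1..M. \<Sum>i=1..N. inverse ((\<sigma> i)^2) *\<^sub>R ?P i j)"
    by (subst sum.swap) (simp add: scaleR_sum_right mult_ac)
  also have "\<dots> = ((10 * \<gamma> / ln 10)^2 * rss_gain R h) *\<^sub>R (\<Sum>j=1..M. s *\<^sub>R mat 1)"
    using sum_outer_gdir_rotate[OF balanced] by simp
  finally show ?thesis
    by (simp only: sum_constant_scaleR) (simp add: mult_ac)
qed

lemma feasible_polar_points:
  assumes "0 \<le> R" "r0 \<le> R" "h0 \<le> h"
    and steps: "\<And>i j. i \<in> {1..N} \<Longrightarrow> j \<in> {2..M} \<Longrightarrow> R * \<bar>\<theta> i j - \<theta> i (j - 1)\<bar> \<le> t0 * cmax"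
  shows "feasible r0 h0 t0 cmax N M x y (\<lambda>i j. polar_point x y R h (\<theta> i j))"
  unfolding feasible_def
proof (intro ballI conjI impI)
  fix i j
  assume "i \<in> {1..N}" "j \<in> {1..M}" "2 \<le> j"
  then have "R * \<bar>\<theta> i j - \<theta> i (j - 1)\<bar> \<le> t0 * cmax"
    by (intro steps) auto
  moreover have "dist (gdir (\<theta> i j)) (gdir (\<theta> i (j - 1))) \<le> \<bar>\<theta> i j - \<theta> i (j - 1)\<bar>"
    by (rule dist_gdir_le)
  ultimately show "norm (polar_point x y R h (\<theta> i j) - polar_point x y R h (\<theta> i (j - 1))) \<le> t0 * cmax"
    using \<open>0 \<le> R\<close> by (metis dist_norm dist_polar_point mult_left_mono order_trans)
qed (use assms in \<open>simp_all add: hdist_polar_point\<close>)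

theorem theorem5:
  fixes \<gamma> r0 h0 t0 cmax c x y :: real
    and \<sigma> \<beta>0 :: "nat \<Rightarrow> real"
    and N M :: nat
  assumes "N \<ge> 1" and "M \<ge> 1"
    and "\<gamma> > 0" and "\<forall>i\<in>{1..N}. \<sigma> i > 0"
    and "r0 > 0" and "h0 > 0" and "t0 > 0" and "cmax > 0"
    and "t0 * real M * cmax < 2 * pi * max r0 h0"
    and "Max ((\<lambda>i. inverse ((\<sigma> i)^2)) ` {1..N}) \<le> (1/2) * (\<Sum>i=1..N. inverse ((\<sigma> i)^2))"
    and "(\<Sum>i=1..N. inverse ((\<sigma> i)^2) *\<^sub>R outer (gdir (\<beta>0 i)) (gdir (\<beta>0 i)))
         = ((1/2) * (\<Sum>i=1..N. inverse ((\<sigma> i)^2))) *\<^sub>R mat 1"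
    and "0 \<le> c" and "c < cmax"
  shows "optimal_P \<gamma> \<sigma> r0 h0 t0 cmax N M x y
           (\<lambda>i j. vector [x + max r0 h0 * cos (\<beta>0 i + (real j - 1) * c * t0 / max r0 h0),
                          y + max r0 h0 * sin (\<beta>0 i + (real j - 1) * c * t0 / max r0 h0),
                          h0])"
proof -
  define R where "R = max r0 h0"
  define \<phi> where "\<phi> j = (real j - 1) * c * t0 / R" for j :: nat
  define T where "T = (10 * \<gamma> / ln 10)^2 * rss_gain R h0 * real M * ((1/2) * (\<Sum>i=1..N. inverse ((\<sigma> i)^2)))"
  have "0 < R" using \<open>0 < r0\<close> by (simp add: R_def)
  have config: "(\<lambda>i j. vector [x + max r0 h0 * cos (\<beta>0 i + (real j - 1) * c * t0 / max r0 h0),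
                          y + max r0 h0 * sin (\<beta>0 i + (real j - 1) * c * t0 / max r0 h0),
                          h0]) = (\<lambda>i j. polar_point x y R h0 (\<beta>0 i + \<phi> j))"
    by (simp add: polar_point_def R_def \<phi>_def)
  have "R * \<bar>(\<beta>0 i + \<phi> j) - (\<beta>0 i + \<phi> (j - 1))\<bar> \<le> t0 * cmax" if "j \<in> {2..M}" for i j
  proof -
    have "\<phi> j - \<phi> (j - 1) = c * t0 / R"
      using that \<open>0 < R\<close> by (simp add: \<phi>_def of_nat_diff field_simps)
    then show ?thesis
      using \<open>0 < R\<close> \<open>0 \<le> c\<close> \<open>c < cmax\<close> \<open>0 < t0\<close> by simp
  qed
  then have feasible: "feasible r0 h0 t0 cmax N M x y (\<lambda>i j. polar_point x y R h0 (\<beta>0 i + \<phi> j))"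
    using \<open>0 < R\<close> by (intro feasible_polar_points) (auto simp: R_def)
  have "det (FIM \<gamma> \<sigma> N M x y (\<lambda>i j. polar_point x y R h0 (\<beta>0 i + \<phi> j))) = T^2"
    using FIM_rotated_polar_points[OF \<open>0 < R\<close> assms(11)]
    by (simp add: T_def det_2 mat_def power2_eq_square)
  moreover have "det (FIM \<gamma> \<sigma> N M x y v) \<le> T^2" if "feasible r0 h0 t0 cmax N M x y v" for v
    using det_FIM_le_of_feasible[OF \<open>0 < r0\<close> \<open>0 < h0\<close> that]
    by (simp add: T_def R_def mult_ac)
  ultimately show ?thesis
    unfolding config optimal_P_def using feasible by auto
qed

end
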